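(* For $\alpha=ae^{i\phi}\in\mathbb{C}$ with $a\ge0$, $\phi\in\mathbb{R}$, set \[J(\alpha)=\frac1\pi\int_0^\pi\log\big(1-2a\cos(\theta-\phi)+a^2\big)\sin^2\theta\,d\theta.\] Then for $0<|\alpha|\le1$, $\alpha\neq\pm1$, \[J(\alpha)=\frac{|\alpha|^2}{4}\cos2\phi-\frac{1}{2\pi}\operatorname{Im}\Big[\Big(\alpha-\frac1\alpha\Big)-\Big(\alpha^2-\frac1{\alpha^2}\Big)\operatorname{arctanh}\alpha+4\operatorname{Li}_2(\alpha)-\operatorname{Li}_2(\alpha^2)\Big],\] and for $|\alpha|>1$, $J(\alpha)=J(\alpha/|\alpha|^2)+\log|\alpha|$.
   Context: Here $\operatorname{Li}_2(z)=\sum_{n\ge1}z^n/n^2$ and $\operatorname{arctanh}z=\sum_{n\ge1,\ n\text{ odd}}z^n/n$ (power series, for $|z|\le1$, $z\neq\pm1$ in the latter), and $\operatorname{Im}$ is the usual imaginary part of a complex number. (The same identity holds with $i$ replaced by any unit imaginary quaternion $I$, viewing $\alpha\in\mathbb{R}+\mathbb{R}I\cong\mathbb{C}$.) *)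

theory Defs
  imports "HOL-Analysis.Analysis"
begin

definition Li2 :: "complex \<Rightarrow> complex" where
  "Li2 z = (\<Sum>n. z ^ (Suc n) / (of_nat (Suc n))^2)"

definition arctanh_ps :: "complex \<Rightarrow> complex" where
  "arctanh_ps z = (\<Sum>n. if odd n then z ^ n / of_nat n else 0)"

definition J :: "real \<Rightarrow> real \<Rightarrow> real" where
  "J a \<phi> = (1 / pi) * integral {0..pi}
      (\<lambda>\<theta>. ln (1 - 2 * a * cos (\<theta> - \<phi>) + a^2) * (sin \<theta>)^2)"

end

theory Submission
  imports Defs
begin

text \<open>
  For \<open>a < 1\<close> put \<open>w = \<alpha> e\<^sup>-\<^sup>i\<^sup>\<theta>\<close>; then
  \<open>log (1 - 2a cos (\<theta> - \<phi>) + a\<^sup>2) = 2 Re Log (1 - w) = -2 Re \<Sum> w\<^sup>n/n\<close>, and integrating termwise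
  against \<open>sin\<^sup>2 \<theta>\<close> on \<open>[0, \<pi>]\<close> only the Fourier coefficients of \<open>sin\<^sup>2\<close> remain: \<open>-\<pi>/4\<close> for
  \<open>n = 2\<close>, \<open>4i/(n(n\<^sup>2 - 4))\<close> for odd \<open>n\<close>, and \<open>0\<close> otherwise. Hence
  \<open>J(\<alpha>) = Re(\<alpha>\<^sup>2)/4 + (8/\<pi>) Im S(\<alpha>)\<close>, where \<open>S(z)\<close> (\<open>quartic_series\<close> below) is the sum of
  \<open>z\<^sup>n/(n\<^sup>2(n\<^sup>2 - 4))\<close> over odd \<open>n\<close>. The partial fractions
  \<open>-16/(n\<^sup>2(n\<^sup>2 - 4)) = 4/n\<^sup>2 - 1/(n - 2) + 1/(n + 2)\<close> turn \<open>-16 S\<close> into the stated combination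
  of \<open>arctanh\<close> and \<open>Li\<^sub>2\<close>; all these series converge on the closed unit disc (\<open>arctanh\<close> by
  summation by parts, as \<open>z\<^sup>2 \<noteq> 1\<close>).

  The factorisation \<open>1 - 2a cos \<psi> + a\<^sup>2 = a (a + 1/a - 2 cos \<psi>)\<close> does the rest: the second factor
  is invariant under \<open>a \<mapsto> 1/a\<close>, which gives \<open>J(a) = J(1/a) + log a\<close>, and it decreases to
  \<open>2 - 2 cos \<psi>\<close> as \<open>a\<close> increases to \<open>1\<close>, so the case \<open>|\<alpha>| = 1\<close> follows by monotone convergence.
\<close>

lemma summable_powser_norm_coeffs:
  fixes c :: "nat \<Rightarrow> 'a :: {real_normed_div_algebra, banach}"
  assumes "summable (\<lambda>n. norm (c n))" and "norm z \<le> 1"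
  shows "summable (\<lambda>n. c n * z ^ n)"
proof (rule summable_comparison_test[OF _ assms(1)])
  have "norm (c n * z ^ n) \<le> norm (c n)" for n
    using assms(2) by (simp add: norm_mult norm_power mult_left_le power_le_one)
  then show "\<exists>N. \<forall>n\<ge>N. norm (c n * z ^ n) \<le> norm (c n)" by blast
qed

lemma continuous_on_powser_cball:
  fixes c :: "nat \<Rightarrow> 'a :: {real_normed_div_algebra, banach}"
  assumes "summable (\<lambda>n. norm (c n))"
  shows "continuous_on (cball 0 1) (\<lambda>z. \<Sum>n. c n * z ^ n)"
proof -
  have lim: "uniform_limit (cball 0 1) (\<lambda>N z. \<Sum>n<N. c n * z ^ n) (\<lambda>z. \<Sum>n. c n * z ^ n) sequentially"
    by (rule Weierstrass_m_test[OF _ assms])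
       (simp add: norm_mult norm_power mult_left_le power_le_one)
  show ?thesis
    by (rule uniform_limit_theorem[OF _ lim]) (auto intro!: continuous_intros always_eventually)
qed

lemma has_integral_suminf:
  fixes f :: "nat \<Rightarrow> real \<Rightarrow> 'a :: banach"
  assumes cont: "\<And>n. continuous_on {a..b} (f n)"
    and int: "\<And>n. (f n has_integral I n) {a..b}"
    and bound: "\<And>n t. t \<in> {a..b} \<Longrightarrow> norm (f n t) \<le> M n" and "summable M"
  shows "((\<lambda>t. \<Sum>n. f n t) has_integral (\<Sum>n. I n)) {a..b}"
proof -
  have "uniform_limit {a..b} (\<lambda>N t. \<Sum>n<N. f n t) (\<lambda>t. \<Sum>n. f n t) sequentially"
    by (rule Weierstrass_m_test[OF bound \<open>summable M\<close>])
  then obtain I' J where I': "\<And>N. ((\<lambda>t. \<Sum>n<N. f n t) has_integral I' N) {a..b}"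
    and J: "((\<lambda>t. \<Sum>n. f n t) has_integral J) {a..b}" and "I' \<longlonglongrightarrow> J"
    by (rule uniform_limit_integral) (auto intro: continuous_on_sum cont)
  moreover have "I' = (\<lambda>N. \<Sum>n<N. I n)"
    using has_integral_sum[of "{..<N}" f I "{a..b}" for N] int I'
    by (meson finite_lessThan has_integral_unique ext)
  ultimately have "I sums J"
    by (simp add: sums_def)
  with J show ?thesis
    by (simp add: sums_iff)
qed

lemma summable_geometric_mult_bounded_variation:
  fixes \<beta> :: "'a :: {real_normed_field, banach}"
  assumes "norm \<beta> \<le> 1" "\<beta> \<noteq> 1" "c \<longlonglongrightarrow> 0"
    and "summable (\<lambda>k. norm (c (Suc k) - c k))"
  shows "summable (\<lambda>k. \<beta> ^ k * c k)"
proof -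
  define g where "g k = \<beta> ^ k * c k" for k
  have norm_power_le: "norm (\<beta> ^ k) \<le> 1" for k
    using assms(1) by (simp add: norm_power power_le_one)
  have "g \<longlonglongrightarrow> 0"
  proof (rule Lim_null_comparison[OF _ tendsto_norm_zero[OF assms(3)]])
    show "\<forall>\<^sub>F k in sequentially. norm (g k) \<le> norm (c k)"
      using norm_power_le by (auto simp: g_def norm_mult intro!: always_eventually mult_left_le_one_le)
  qed
  then have "summable (\<lambda>k. g k - g (Suc k))"
    by (rule telescope_summable')
  moreover have "summable (\<lambda>k. \<beta> ^ Suc k * (c (Suc k) - c k))"
  proof (rule summable_comparison_test[OF _ assms(4)])
    have "norm (\<beta> ^ Suc k * (c (Suc k) - c k)) \<le> norm (c (Suc k) - c k)" for k
      unfolding norm_mult by (rule mult_left_le_one_le[OF _ _ norm_power_le]) auto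
    then show "\<exists>N. \<forall>k\<ge>N. norm (\<beta> ^ Suc k * (c (Suc k) - c k)) \<le> norm (c (Suc k) - c k)"
      by blast
  qed
  ultimately have "summable (\<lambda>k. ((g k - g (Suc k)) + \<beta> ^ Suc k * (c (Suc k) - c k)) / (1 - \<beta>))"
    by (intro summable_divide summable_add)
  also have "(\<lambda>k. ((g k - g (Suc k)) + \<beta> ^ Suc k * (c (Suc k) - c k)) / (1 - \<beta>)) = (\<lambda>k. \<beta> ^ k * c k)"
    using assms(2) by (intro ext) (simp add: g_def field_simps)
  finally show ?thesis .
qed

lemma sums_odd_iff: "(\<lambda>k. f (2 * k + 1)) sums s \<longleftrightarrow> (\<lambda>n. if odd n then f n else 0) sums s"
proof -
  have "(\<lambda>k. (\<lambda>n. if odd n then f n else 0) (2 * k + 1)) sums s \<longleftrightarrow>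
        (\<lambda>n. if odd n then f n else 0) sums s"
  proof (rule sums_mono_reindex)
    show "strict_mono (\<lambda>k. 2 * k + 1 :: nat)"
      by (simp add: strict_mono_def)
    show "(if odd n then f n else 0) = 0" if "n \<notin> range (\<lambda>k. 2 * k + 1)" for n
      using that by (metis oddE rangeI)
  qed
  then show ?thesis by simp
qed

lemma sums_even_iff: "(\<lambda>k. f (2 * k)) sums s \<longleftrightarrow> (\<lambda>n. if even n then f n else 0) sums s"
proof -
  have "(\<lambda>k. (\<lambda>n. if even n then f n else 0) (2 * k)) sums s \<longleftrightarrow>
        (\<lambda>n. if even n then f n else 0) sums s"
  proof (rule sums_mono_reindex)
    show "strict_mono (\<lambda>k. 2 * k :: nat)"
      by (simp add: strict_mono_def)
    show "(if even n then f n else 0) = 0" if "n \<notin> range (\<lambda>k. 2 * k)" for n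
      using that by (metis evenE rangeI)
  qed
  then show ?thesis by simp
qed

lemma odd_of_nat_nonzero:
  assumes "odd n"
  shows "(of_nat n :: 'a :: ring_char_0) \<noteq> 0" "of_nat n - 2 \<noteq> (0 :: 'a)" "of_nat n + 2 \<noteq> (0 :: 'a)"
proof -
  have "n \<noteq> 0" "n \<noteq> 2" using assms odd_pos by auto
  then show "(of_nat n :: 'a) \<noteq> 0" "of_nat n - 2 \<noteq> (0 :: 'a)"
    by (simp, metis of_nat_eq_iff of_nat_numeral right_minus_eq)
  have "of_nat n + 2 = (of_nat (n + 2) :: 'a)" by simp
  then show "of_nat n + 2 \<noteq> (0 :: 'a)" by (simp only: of_nat_eq_0_iff)
qed

lemma norm_one_minus_rcis_sq:
  "norm (1 - of_real a * cis \<psi>) ^ 2 = 1 - 2 * a * cos \<psi> + a ^ 2"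
proof -
  have "norm (1 - of_real a * cis \<psi>) ^ 2 = (1 - a * cos \<psi>) ^ 2 + (a * sin \<psi>) ^ 2"
    by (simp add: cmod_power2)
  also have "\<dots> = 1 - 2 * a * cos \<psi> + a ^ 2"
    using sin_cos_squared_add[of \<psi>] by algebra
  finally show ?thesis .
qed

lemma plus_inverse_minus_two_cos_pos:
  fixes a :: real
  assumes "0 < a" "a \<noteq> 1"
  shows "0 < a + 1 / a - 2 * cos x"
proof -
  have "0 < (1 - a) ^ 2 / a"
    using assms by simp
  also have "(1 - a) ^ 2 / a = a + 1 / a - 2"
    using assms by (simp add: field_simps power2_eq_square)
  finally show ?thesis
    using cos_le_one[of x] by linarith
qed

lemma plus_inverse_antimono:
  fixes x y :: real
  assumes "0 < x" "x \<le> y" "y \<le> 1"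
  shows "y + 1 / y \<le> x + 1 / x"
proof -
  have "x * y \<le> 1"
    using assms mult_le_one[of x y] by simp
  then have "0 \<le> (y - x) * (1 - x * y) / (x * y)"
    using assms by simp
  also have "(y - x) * (1 - x * y) / (x * y) = x + 1 / x - (y + 1 / y)"
    using assms by (simp add: field_simps)
  finally show ?thesis by simp
qed

lemma negligible_cos_eq_one: "negligible {t. cos (t - \<phi>) = (1 :: real)}"
proof -
  have "{t. cos (t - \<phi>) = 1} = (\<Union>n::int. {of_int n * 2 * pi + \<phi>})"
    by (auto simp: cos_one_2pi_int algebra_simps)
  then show ?thesis
    by (auto intro!: negligible_countable_Union)
qed

section \<open>Fourier coefficients of \<open>sin\<^sup>2\<close> on \<open>[0, \<pi>]\<close>\<close>

lemma has_integral_exp_int_0_pi: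
  fixes m :: int
  shows "((\<lambda>t. exp (\<i> * of_int m * of_real t)) has_integral
          (if m = 0 then of_real pi else if even m then 0 else 2 * \<i> / of_int m)) {0..pi}"
proof (cases "m = 0")
  case True
  then show ?thesis
    using has_integral_const_real[of "1::complex" 0 pi] by (simp add: scaleR_conv_of_real)
next
  case False
  have deriv: "((\<lambda>t. exp (\<i> * of_int m * of_real t) / (\<i> * of_int m)) has_vector_derivative
                 exp (\<i> * of_int m * of_real t)) (at t within {0..pi})" for t
    using False
    by (auto intro!: derivative_eq_intros has_vector_derivative_real_field simp: field_simps)
  have "exp (\<i> * of_int m * of_real pi) = (-1) powi m"
    using cis_power_int[of pi m] by (simp add: cis_conv_exp mult_ac)
  then have "(exp (\<i> * of_int m * of_real pi) - 1) / (\<i> * of_int m) =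
             (if even m then 0 else 2 * \<i> / of_int m)"
    using False by (auto simp: power_int_minus_left field_simps)
  then show ?thesis
    using fundamental_theorem_of_calculus[OF _ deriv] False by (simp add: diff_divide_distrib)
qed

lemma exp_mult_sin_sq:
  "exp (- \<i> * of_nat n * of_real t) * of_real (sin t ^ 2) =
     (2 * exp (\<i> * of_int (- int n) * of_real t) - exp (\<i> * of_int (2 - int n) * of_real t)
      - exp (\<i> * of_int (- int n - 2) * of_real t)) / 4"
proof -
  have sin_exp: "of_real (sin t) = (exp (\<i> * of_real t) - exp (- (\<i> * of_real t))) / (2 * \<i>)"
    by (simp add: sin_of_real[symmetric] sin_exp_eq)
  show ?thesis
    unfolding of_real_power sin_exp by (simp add: power2_eq_square field_simps mult_exp_exp)
qed

definition quartic_coeff :: "nat \<Rightarrow> complex" where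
  "quartic_coeff n = (if odd n then 1 / (of_nat n ^ 2 * (of_nat n ^ 2 - 4)) else 0)"

lemma has_integral_exp_mult_sin_sq:
  "((\<lambda>t. exp (- \<i> * of_nat n * of_real t) * of_real (sin t ^ 2)) has_integral
     (if n = 0 then of_real pi / 2 else if n = 2 then - of_real pi / 4
      else 4 * \<i> * of_nat n * quartic_coeff n)) {0..pi}"
proof -
  define E :: "int \<Rightarrow> complex" where
    "E m = (if m = 0 then of_real pi else if even m then 0 else 2 * \<i> / of_int m)" for m
  have "((\<lambda>t. exp (- \<i> * of_nat n * of_real t) * of_real (sin t ^ 2)) has_integral
         (2 * E (- int n) - E (2 - int n) - E (- int n - 2)) / 4) {0..pi}"
    unfolding exp_mult_sin_sq E_def
    by (intro has_integral_divide has_integral_diff has_integral_mult_right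
              has_integral_exp_int_0_pi)
  moreover have "(2 * E (- int n) - E (2 - int n) - E (- int n - 2)) / 4 =
      (if n = 0 then of_real pi / 2 else if n = 2 then - of_real pi / 4
       else 4 * \<i> * of_nat n * quartic_coeff n)"
  proof (cases "odd n")
    case True
    define x :: complex where "x = of_nat n"
    have x_nonzero: "x \<noteq> 0" "x - 2 \<noteq> 0" "x + 2 \<noteq> 0"
      unfolding x_def by (rule odd_of_nat_nonzero[OF True])+
    have "2 * \<i> / (2 - x) = - (2 * \<i> / (x - 2))" "2 * \<i> / (- x - 2) = - (2 * \<i> / (x + 2))"
      by (metis divide_minus_right minus_diff_eq,
          metis divide_minus_right minus_add_distrib diff_conv_add_uminus)
    then have E_odd: "E (- int n) = - (2 * \<i> / x)" "E (2 - int n) = - (2 * \<i> / (x - 2))"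
      "E (- int n - 2) = - (2 * \<i> / (x + 2))"
      using True odd_pos by (auto simp: E_def x_def)
    have factor: "x ^ 2 * (x ^ 2 - 4) = x * (x * (x - 2) * (x + 2))"
      by (simp add: algebra_simps power2_eq_square)
    have "(2 * E (- int n) - E (2 - int n) - E (- int n - 2)) / 4 = 4 * \<i> / (x * (x - 2) * (x + 2))"
      unfolding E_odd using x_nonzero by (simp add: field_split_simps)
    also have "\<dots> = 4 * \<i> * x * (1 / (x ^ 2 * (x ^ 2 - 4)))"
      unfolding factor using x_nonzero by simp
    finally show ?thesis
      using True odd_pos by (auto simp: quartic_coeff_def x_def)
  qed (auto simp: E_def quartic_coeff_def)
  ultimately show ?thesis by simp
qed

lemma has_integral_sin_sq_0_pi: "((\<lambda>t. sin t ^ 2) has_integral pi / 2) {0..pi}"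
  using has_integral_linear[OF has_integral_exp_mult_sin_sq[of 0] bounded_linear_Re]
  by (simp add: o_def)

section \<open>The odd quartic series\<close>

definition quartic_series :: "complex \<Rightarrow> complex" where
  "quartic_series z = (\<Sum>n. quartic_coeff n * z ^ n)"

lemma norm_quartic_coeff_le: "norm (quartic_coeff n) \<le> inverse (real n ^ 2)"
proof (cases "odd n")
  case True
  have "1 \<le> \<bar>real n ^ 2 - 4\<bar>"
  proof (cases "n = 1")
    case False
    with True have "3 \<le> n" by presburger
    then have "9 \<le> real n ^ 2"
      using power_mono[of 3 "real n" 2] by simp
    then show ?thesis by simp
  qed simp
  then have "real n ^ 2 \<le> \<bar>real n ^ 2 * (real n ^ 2 - 4)\<bar>"
    by (simp add: abs_mult mult_le_cancel_left1)
  moreover have "0 < real n ^ 2"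
    using True odd_pos by simp
  ultimately have "1 / \<bar>real n ^ 2 * (real n ^ 2 - 4)\<bar> \<le> inverse (real n ^ 2)"
    by (simp add: inverse_eq_divide frac_le)
  moreover have "quartic_coeff n = of_real (1 / (real n ^ 2 * (real n ^ 2 - 4)))"
    using True by (simp add: quartic_coeff_def)
  ultimately show ?thesis
    by (simp only: norm_of_real abs_divide abs_one)
qed (simp add: quartic_coeff_def)

lemma summable_norm_quartic_coeff: "summable (\<lambda>n. norm (quartic_coeff n))"
  by (rule summable_comparison_test[OF _ inverse_power_summable[of 2]])
     (use norm_quartic_coeff_le in auto)

lemma quartic_series_sums:
  "norm z \<le> 1 \<Longrightarrow> (\<lambda>n. quartic_coeff n * z ^ n) sums quartic_series z"
  unfolding quartic_series_def
  by (intro summable_sums summable_powser_norm_coeffs summable_norm_quartic_coeff)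

lemma continuous_on_quartic_series: "continuous_on (cball 0 1) quartic_series"
  unfolding quartic_series_def[abs_def]
  by (rule continuous_on_powser_cball[OF summable_norm_quartic_coeff])

lemma quartic_coeff_partial_fractions:
  "-16 * quartic_coeff n =
     (if odd n then 4 / of_nat n ^ 2 - 1 / (of_nat n - 2) + 1 / (of_nat n + 2) else 0)"
proof (cases "odd n")
  case True
  define x :: complex where "x = of_nat n"
  have "x \<noteq> 0" "x - 2 \<noteq> 0" "x + 2 \<noteq> 0"
    unfolding x_def by (rule odd_of_nat_nonzero[OF True])+
  moreover have "x ^ 2 * (x ^ 2 - 4) = x ^ 2 * (x - 2) * (x + 2)"
    by (simp add: algebra_simps power2_eq_square)
  ultimately have "-16 * (1 / (x ^ 2 * (x ^ 2 - 4))) = 4 / x ^ 2 - 1 / (x - 2) + 1 / (x + 2)"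
    by (simp add: field_simps) (simp add: algebra_simps power2_eq_square)
  then show ?thesis
    using True by (simp add: quartic_coeff_def x_def)
qed (simp add: quartic_coeff_def)

lemma arctanh_ps_sums:
  assumes "norm z \<le> 1" "z ^ 2 \<noteq> 1"
  shows "(\<lambda>n. if odd n then z ^ n / of_nat n else 0) sums arctanh_ps z"
proof -
  define d where "d k = 1 / real (2 * k + 1)" for k
  have "d \<longlonglongrightarrow> 0"
  proof (rule Lim_null_comparison[OF _ LIMSEQ_inverse_real_of_nat])
    show "\<forall>\<^sub>F k in sequentially. norm (d k) \<le> inverse (real (Suc k))"
      by (auto simp: d_def divide_simps intro!: always_eventually)
  qed
  have "summable (\<lambda>k. (z ^ 2) ^ k * of_real (d k))"
  proof (rule summable_geometric_mult_bounded_variation[OF _ assms(2)])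
    show "(\<lambda>k. of_real (d k)) \<longlonglongrightarrow> (0 :: complex)"
      using tendsto_of_real[OF \<open>d \<longlonglongrightarrow> 0\<close>] by simp
    show "norm (z ^ 2) \<le> 1"
      using assms(1) by (simp add: norm_power power_le_one)
    have "d (Suc k) \<le> d k" for k
      by (simp add: d_def frac_le)
    then have "norm (of_real (d (Suc k)) - of_real (d k) :: complex) = d k - d (Suc k)" for k
      by (simp flip: of_real_diff)
    then show "summable (\<lambda>k. norm (of_real (d (Suc k)) - of_real (d k) :: complex))"
      using telescope_summable'[OF \<open>d \<longlonglongrightarrow> 0\<close>] by simp
  qed
  then have "summable (\<lambda>k. z * ((z ^ 2) ^ k * of_real (d k)))"
    by (rule summable_mult)
  moreover have "z * ((z ^ 2) ^ k * of_real (d k)) = z ^ (2 * k + 1) / of_nat (2 * k + 1)" for k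
    by (simp add: d_def power_add flip: power_mult)
  ultimately have "(\<lambda>k. z ^ (2 * k + 1) / of_nat (2 * k + 1)) sums (\<Sum>k. z ^ (2 * k + 1) / of_nat (2 * k + 1))"
    by (simp add: summable_sums)
  then have "(\<lambda>n. if odd n then z ^ n / of_nat n else 0) sums (\<Sum>k. z ^ (2 * k + 1) / of_nat (2 * k + 1))"
    using sums_odd_iff[of "\<lambda>n. z ^ n / of_nat n"] by simp
  then show ?thesis
    unfolding arctanh_ps_def by (simp add: sums_iff)
qed

lemma Li2_sums:
  assumes "norm z \<le> 1"
  shows "(\<lambda>n. z ^ n / of_nat n ^ 2) sums Li2 z"
proof -
  have "summable (\<lambda>n. norm (1 / of_nat n ^ 2 :: complex))"
    using inverse_power_summable[of 2, where 'a=real] by (simp add: norm_divide norm_power inverse_eq_divide)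
  then have summable: "summable (\<lambda>n. 1 / of_nat n ^ 2 * z ^ n)"
    by (rule summable_powser_norm_coeffs[OF _ assms])
  then have "(\<lambda>n. z ^ n / of_nat n ^ 2) sums (\<Sum>n. z ^ n / of_nat n ^ 2)"
    by (simp add: summable_sums)
  moreover have "(\<Sum>n. z ^ n / of_nat n ^ 2) = Li2 z"
    using summable unfolding Li2_def
    by (subst suminf_split_head) (simp_all add: mult.commute)
  ultimately show ?thesis by simp
qed

lemma Li2_odd_sums:
  assumes "norm z \<le> 1"
  shows "(\<lambda>n. if odd n then z ^ n / of_nat n ^ 2 else 0) sums (Li2 z - Li2 (z ^ 2) / 4)"
proof -
  have "(\<lambda>k. (z ^ 2) ^ k / of_nat k ^ 2 / 4) sums (Li2 (z ^ 2) / 4)"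
    using assms by (intro sums_divide Li2_sums) (simp add: norm_power power_le_one)
  moreover have "(z ^ 2) ^ k / of_nat k ^ 2 / 4 = z ^ (2 * k) / of_nat (2 * k) ^ 2" for k
    by (simp add: power_mult_distrib flip: power_mult)
  ultimately have "(\<lambda>n. if even n then z ^ n / of_nat n ^ 2 else 0) sums (Li2 (z ^ 2) / 4)"
    by (simp flip: sums_even_iff)
  with Li2_sums[OF assms]
  have "(\<lambda>n. z ^ n / of_nat n ^ 2 - (if even n then z ^ n / of_nat n ^ 2 else 0)) sums
        (Li2 z - Li2 (z ^ 2) / 4)"
    by (rule sums_diff)
  also have "(\<lambda>n. z ^ n / of_nat n ^ 2 - (if even n then z ^ n / of_nat n ^ 2 else 0)) =
             (\<lambda>n. if odd n then z ^ n / of_nat n ^ 2 else 0)"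
    by auto
  finally show ?thesis .
qed

lemma odd_power_div_minus_two_sums:
  assumes "norm z \<le> 1" "z ^ 2 \<noteq> 1"
  shows "(\<lambda>n. if odd n then z ^ n / (of_nat n - 2) else 0) sums (z ^ 2 * arctanh_ps z - z)"
proof -
  define q where "q n = (if odd n then z ^ n / (of_nat n - 2) else 0)" for n
  have "(\<lambda>n. q (n + 2)) = (\<lambda>n. z ^ 2 * (if odd n then z ^ n / of_nat n else 0))"
    by (rule ext) (simp add: q_def power_add mult_ac power2_eq_square)
  then have "(\<lambda>n. q (n + 2)) sums (z ^ 2 * arctanh_ps z)"
    using sums_mult[OF arctanh_ps_sums[OF assms]] by simp
  then have "q sums (z ^ 2 * arctanh_ps z + (\<Sum>n<2. q n))"
    by (simp only: sums_iff_shift)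
  moreover have "(\<Sum>n<2. q n) = - z"
    by (simp add: q_def eval_nat_numeral)
  ultimately have "q sums (z ^ 2 * arctanh_ps z - z)"
    by simp
  then show ?thesis
    unfolding q_def[abs_def] .
qed

lemma odd_power_div_plus_two_sums:
  assumes "norm z \<le> 1" "z \<noteq> 0" "z ^ 2 \<noteq> 1"
  shows "(\<lambda>n. if odd n then z ^ n / (of_nat n + 2) else 0) sums ((arctanh_ps z - z) / z ^ 2)"
proof -
  define t where "t n = (if odd n then z ^ n / of_nat n else 0)" for n
  have "t sums arctanh_ps z"
    unfolding t_def[abs_def] by (rule arctanh_ps_sums[OF assms(1,3)])
  moreover have "(\<Sum>n<2. t n) = z"
    by (simp add: t_def eval_nat_numeral)
  ultimately have "(\<lambda>n. t (n + 2)) sums (arctanh_ps z - z)"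
    by (simp only: sums_iff_shift) simp
  then have "(\<lambda>n. t (n + 2) / z ^ 2) sums ((arctanh_ps z - z) / z ^ 2)"
    by (rule sums_divide)
  moreover have "(\<lambda>n. t (n + 2) / z ^ 2) = (\<lambda>n. if odd n then z ^ n / (of_nat n + 2) else 0)"
    using assms(2) by (intro ext) (simp add: t_def power_add add_ac power2_eq_square)
  ultimately show ?thesis
    by simp
qed

lemma quartic_series_identity:
  assumes "norm z \<le> 1" "z \<noteq> 0" "z ^ 2 \<noteq> 1"
  shows "(z - 1 / z) - (z ^ 2 - 1 / z ^ 2) * arctanh_ps z + 4 * Li2 z - Li2 (z ^ 2) =
         -16 * quartic_series z"
proof -
  define l where "l n = (if odd n then z ^ n / of_nat n ^ 2 else 0)" for n
  define q where "q n = (if odd n then z ^ n / (of_nat n - 2) else 0)" for n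
  define r where "r n = (if odd n then z ^ n / (of_nat n + 2) else 0)" for n
  have "(\<lambda>n. -16 * (quartic_coeff n * z ^ n)) = (\<lambda>n. 4 * l n - q n + r n)"
    by (rule ext, subst mult.assoc[symmetric], subst quartic_coeff_partial_fractions)
       (simp add: l_def q_def r_def algebra_simps)
  then have "(\<lambda>n. -16 * (quartic_coeff n * z ^ n)) sums
        (4 * (Li2 z - Li2 (z ^ 2) / 4) - (z ^ 2 * arctanh_ps z - z) + (arctanh_ps z - z) / z ^ 2)"
    unfolding l_def q_def r_def
    by (simp only:) (intro sums_add sums_diff sums_mult Li2_odd_sums odd_power_div_minus_two_sums
                           odd_power_div_plus_two_sums assms)
  moreover have "(\<lambda>n. -16 * (quartic_coeff n * z ^ n)) sums (-16 * quartic_series z)"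
    by (rule sums_mult[OF quartic_series_sums[OF assms(1)]])
  ultimately have "-16 * quartic_series z =
      4 * (Li2 z - Li2 (z ^ 2) / 4) - (z ^ 2 * arctanh_ps z - z) + (arctanh_ps z - z) / z ^ 2"
    using sums_unique2 by blast
  moreover have "4 * (Li2 z - Li2 (z ^ 2) / 4) - (z ^ 2 * arctanh_ps z - z) + (arctanh_ps z - z) / z ^ 2 =
                 (z - 1 / z) - (z ^ 2 - 1 / z ^ 2) * arctanh_ps z + 4 * Li2 z - Li2 (z ^ 2)"
    using assms(2) by (simp add: field_simps power2_eq_square)
  ultimately show ?thesis
    by simp
qed

section \<open>The integral \<open>J\<close>\<close>

lemma Ln_one_minus_mult_sin_sq_sums:
  assumes "norm \<alpha> < 1"
  shows "(\<lambda>n. - (\<alpha> ^ n / of_nat n) * (exp (- \<i> * of_nat n * of_real t) * of_real (sin t ^ 2))) sums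
           (Ln (1 - \<alpha> * exp (- \<i> * of_real t)) * of_real (sin t ^ 2))"
proof -
  define w where "w = \<alpha> * exp (- \<i> * of_real t)"
  \<comment> \<open>the term for \<open>n = 0\<close> is \<open>0\<close> because division by \<open>0\<close> yields \<open>0\<close>\<close>
  have "(\<lambda>n. - (w ^ n) / of_nat n) sums Ln (1 - w)"
    using Ln_series'[of "- w"] assms by (simp add: w_def norm_mult norm_exp)
  then have "(\<lambda>n. - (w ^ n) / of_nat n * of_real (sin t ^ 2)) sums (Ln (1 - w) * of_real (sin t ^ 2))"
    by (rule sums_mult2)
  also have "(\<lambda>n. - (w ^ n) / of_nat n * of_real (sin t ^ 2)) =
             (\<lambda>n. - (\<alpha> ^ n / of_nat n) * (exp (- \<i> * of_nat n * of_real t) * of_real (sin t ^ 2)))"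
    by (rule ext) (simp add: w_def power_mult_distrib exp_of_nat_mult[symmetric] mult_ac)
  finally have "(\<lambda>n. - (\<alpha> ^ n / of_nat n) * (exp (- \<i> * of_nat n * of_real t) * of_real (sin t ^ 2))) sums
                (Ln (1 - w) * of_real (sin t ^ 2))" .
  then show ?thesis
    by (simp only: w_def)
qed

lemma has_integral_Ln_mult_sin_sq:
  assumes "norm \<alpha> < 1"
  shows "((\<lambda>t. Ln (1 - \<alpha> * exp (- \<i> * of_real t)) * of_real (sin t ^ 2)) has_integral
          (of_real pi * \<alpha> ^ 2 / 8 - 4 * \<i> * quartic_series \<alpha>)) {0..pi}"
proof -
  define f where "f n t = - (\<alpha> ^ n / of_nat n) * (exp (- \<i> * of_nat n * of_real t) * of_real (sin t ^ 2))"
    for n t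
  have f_bound: "norm (f n t) \<le> norm \<alpha> ^ n" for n t
  proof -
    have "norm (f n t) = norm \<alpha> ^ n / real n * sin t ^ 2"
      by (simp add: f_def norm_mult norm_divide norm_power norm_exp)
    also have "\<dots> \<le> norm \<alpha> ^ n / real n"
      by (intro mult_left_le) (auto simp: abs_square_le_1)
    also have "\<dots> \<le> norm \<alpha> ^ n"
      by (cases "n = 0") (auto simp: divide_le_eq mult_le_cancel_left1)
    finally show ?thesis .
  qed
  define c where "c n = - (\<alpha> ^ n / of_nat n) *
    (if n = 0 then of_real pi / 2 else if n = 2 then - of_real pi / 4
     else 4 * \<i> * of_nat n * quartic_coeff n)" for n
  have "((\<lambda>t. \<Sum>n. f n t) has_integral (\<Sum>n. c n)) {0..pi}"
  proof (rule has_integral_suminf[OF _ _ f_bound])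
    show "continuous_on {0..pi} (f n)" for n
      unfolding f_def by (intro continuous_intros)
    show "(f n has_integral c n) {0..pi}" for n
      unfolding f_def c_def by (intro has_integral_mult_right has_integral_exp_mult_sin_sq)
    show "summable (\<lambda>n. norm \<alpha> ^ n)"
      using assms by simp
  qed
  moreover have "(\<lambda>t. \<Sum>n. f n t) =
                 (\<lambda>t. Ln (1 - \<alpha> * exp (- \<i> * of_real t)) * of_real (sin t ^ 2))"
    using Ln_one_minus_mult_sin_sq_sums[OF assms] by (simp add: f_def sums_iff)
  moreover have "c = (\<lambda>n. (if n = 2 then of_real pi * \<alpha> ^ 2 / 8 else 0) - 4 * \<i> * (quartic_coeff n * \<alpha> ^ n))"
    by (auto simp: c_def quartic_coeff_def)
  then have "c sums (of_real pi * \<alpha> ^ 2 / 8 - 4 * \<i> * quartic_series \<alpha>)"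
    using sums_diff[OF sums_single[of 2 "\<lambda>_. of_real pi * \<alpha> ^ 2 / 8"]
                   sums_mult[OF quartic_series_sums, of \<alpha> "4 * \<i>"]] assms
    by simp
  ultimately show ?thesis
    by (simp add: sums_iff)
qed

lemma J_eq_quartic_series_less_one:
  assumes "0 \<le> a" "a < 1"
  shows "J a \<phi> = a ^ 2 * cos (2 * \<phi>) / 4 + 8 / pi * Im (quartic_series (of_real a * cis \<phi>))"
proof -
  define \<alpha> where "\<alpha> = of_real a * cis \<phi>"
  have norm_\<alpha>: "norm \<alpha> = a"
    using assms by (simp add: \<alpha>_def norm_mult)
  have integrand_eq: "ln (1 - 2 * a * cos (t - \<phi>) + a ^ 2) * sin t ^ 2 =
      2 * Re (Ln (1 - \<alpha> * exp (- \<i> * of_real t)) * of_real (sin t ^ 2))" for t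
  proof -
    have w_rcis: "\<alpha> * exp (- \<i> * of_real t) = of_real a * cis (\<phi> - t)"
      by (simp add: \<alpha>_def cis_conv_exp exp_add[symmetric] algebra_simps)
    then have "norm (\<alpha> * exp (- \<i> * of_real t)) = a"
      using assms by (simp add: norm_mult)
    then have "1 - \<alpha> * exp (- \<i> * of_real t) \<noteq> 0"
      using assms by auto
    moreover have "1 - 2 * a * cos (t - \<phi>) + a ^ 2 = norm (1 - \<alpha> * exp (- \<i> * of_real t)) ^ 2"
      unfolding w_rcis norm_one_minus_rcis_sq by (simp add: cos_diff mult_ac)
    ultimately show ?thesis
      by (simp add: ln_realpow flip: of_real_power)
  qed
  have "((\<lambda>t. ln (1 - 2 * a * cos (t - \<phi>) + a ^ 2) * sin t ^ 2) has_integral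
          2 * Re (of_real pi * \<alpha> ^ 2 / 8 - 4 * \<i> * quartic_series \<alpha>)) {0..pi}"
    unfolding integrand_eq
    using has_integral_linear[OF has_integral_Ln_mult_sin_sq bounded_linear_Re] assms norm_\<alpha>
    by (intro has_integral_mult_right) (simp add: o_def)
  moreover have "Re (\<alpha> ^ 2) = a ^ 2 * cos (2 * \<phi>)"
    using Complex.DeMoivre[of \<phi> 2] by (simp add: \<alpha>_def power_mult_distrib)
  ultimately show ?thesis
    unfolding J_def by (simp add: integral_unique field_simps \<alpha>_def)
qed

definition J_sym :: "real \<Rightarrow> real \<Rightarrow> real" where
  "J_sym a \<phi> = (1 / pi) * integral {0..pi} (\<lambda>t. ln (a + 1 / a - 2 * cos (t - \<phi>)) * sin t ^ 2)"

lemma integrable_ln_plus_inverse_mult_sin_sq: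
  assumes "0 < a" "a \<noteq> 1"
  shows "(\<lambda>t. ln (a + 1 / a - 2 * cos (t - \<phi>)) * sin t ^ 2) integrable_on {0..pi}"
  using plus_inverse_minus_two_cos_pos[OF assms]
  by (intro integrable_continuous_real continuous_intros) (auto simp: less_imp_neq[symmetric])

lemma J_eq_ln_plus_J_sym:
  assumes "0 < a"
  shows "J a \<phi> = ln a / 2 + J_sym a \<phi>"
proof (cases "a = 1")
  case False
  have integrand_eq: "ln (1 - 2 * a * cos (t - \<phi>) + a ^ 2) * sin t ^ 2 =
        ln a * sin t ^ 2 + ln (a + 1 / a - 2 * cos (t - \<phi>)) * sin t ^ 2" for t
  proof -
    have "1 - 2 * a * cos (t - \<phi>) + a ^ 2 = a * (a + 1 / a - 2 * cos (t - \<phi>))"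
      using assms by (simp add: field_simps power2_eq_square)
    then show ?thesis
      using assms plus_inverse_minus_two_cos_pos[OF assms False, of "t - \<phi>"]
      by (simp add: ln_mult distrib_right)
  qed
  have "((\<lambda>t. ln (1 - 2 * a * cos (t - \<phi>) + a ^ 2) * sin t ^ 2) has_integral
      ln a * (pi / 2) + integral {0..pi} (\<lambda>t. ln (a + 1 / a - 2 * cos (t - \<phi>)) * sin t ^ 2)) {0..pi}"
    unfolding integrand_eq
    by (intro has_integral_add has_integral_mult_right has_integral_sin_sq_0_pi integrable_integral
              integrable_ln_plus_inverse_mult_sin_sq assms False)
  then show ?thesis
    unfolding J_def J_sym_def by (simp add: integral_unique field_simps)
qed (simp add: J_def J_sym_def)

lemma J_inverse:
  assumes "0 < a"
  shows "J a \<phi> = J (1 / a) \<phi> + ln a"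
  using J_eq_ln_plus_J_sym[OF assms, of \<phi>] J_eq_ln_plus_J_sym[of "1 / a" \<phi>] assms
  by (simp add: J_sym_def ln_div add.commute)

lemma J_sym_tendsto_one:
  fixes a :: "nat \<Rightarrow> real"
  assumes pos: "\<And>k. 0 < a k" and less_one: "\<And>k. a k < 1"
    and mono: "\<And>k. a k \<le> a (Suc k)" and "a \<longlonglongrightarrow> 1"
    and conv: "convergent (\<lambda>k. J_sym (a k) \<phi>)"
  shows "(\<lambda>k. J_sym (a k) \<phi>) \<longlonglongrightarrow> J_sym 1 \<phi>"
proof -
  define F where "F k t = ln (a k + 1 / a k - 2 * cos (t - \<phi>)) * sin t ^ 2" for k t
  define S where "S = {0..pi} - {t. cos (t - \<phi>) = 1}"
  have F_pos: "0 < a k + 1 / a k - 2 * cos (t - \<phi>)" for k t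
    using plus_inverse_minus_two_cos_pos[OF pos less_imp_neq[OF less_one]] .
  have integral_S: "integral S f = integral {0..pi} f" for f :: "real \<Rightarrow> real"
    unfolding S_def
    by (rule integral_spike_set) (auto intro: negligible_subset[OF negligible_cos_eq_one])
  have "(\<lambda>t. ln (2 - 2 * cos (t - \<phi>)) * sin t ^ 2) integrable_on S \<and>
        (\<lambda>k. integral S (F k)) \<longlonglongrightarrow> integral S (\<lambda>t. ln (2 - 2 * cos (t - \<phi>)) * sin t ^ 2)"
  proof (rule monotone_convergence_decreasing)
    show "F k integrable_on S" for k
      using integrable_ln_plus_inverse_mult_sin_sq[OF pos less_imp_neq[OF less_one]]
      unfolding S_def F_def[abs_def]
      by (rule integrable_spike_set) (auto intro: negligible_subset[OF negligible_cos_eq_one])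
    show "F (Suc k) t \<le> F k t" for k t
      unfolding F_def using plus_inverse_antimono[OF pos mono less_imp_le[OF less_one]] F_pos
      by (intro mult_right_mono) auto
    show "(\<lambda>k. F k t) \<longlonglongrightarrow> ln (2 - 2 * cos (t - \<phi>)) * sin t ^ 2" if "t \<in> S" for t
    proof -
      have "cos (t - \<phi>) \<noteq> 1" using that by (simp add: S_def)
      then have "2 - 2 * cos (t - \<phi>) \<noteq> 0" by simp
      moreover have "(\<lambda>k. a k + 1 / a k - 2 * cos (t - \<phi>)) \<longlonglongrightarrow> 1 + 1 / 1 - 2 * cos (t - \<phi>)"
        by (intro tendsto_intros \<open>a \<longlonglongrightarrow> 1\<close>) simp
      ultimately show ?thesis unfolding F_def by (intro tendsto_mult_right tendsto_ln) simp_all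
    qed
    have "(\<lambda>k. integral S (F k)) = (\<lambda>k. pi * J_sym (a k) \<phi>)"
      by (simp add: integral_S J_sym_def F_def[abs_def])
    moreover obtain L where "(\<lambda>k. J_sym (a k) \<phi>) \<longlonglongrightarrow> L"
      using conv by (auto simp: convergent_def)
    ultimately show "bounded (range (\<lambda>k. integral S (F k)))"
      by (metis convergent_imp_bounded tendsto_mult_left)
  qed
  then have "(\<lambda>k. pi * J_sym (a k) \<phi>) \<longlonglongrightarrow> pi * J_sym 1 \<phi>"
    by (simp add: integral_S J_sym_def F_def[abs_def])
  then show ?thesis
    using tendsto_mult_left[of _ _ _ "1 / pi"] by simp
qed

lemma J_eq_quartic_series:
  assumes "0 \<le> a" "a \<le> 1"
  shows "J a \<phi> = a ^ 2 * cos (2 * \<phi>) / 4 + 8 / pi * Im (quartic_series (of_real a * cis \<phi>))"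
proof (cases "a < 1")
  case True
  then show ?thesis by (rule J_eq_quartic_series_less_one[OF assms(1)])
next
  case False
  then have "a = 1" using assms(2) by simp
  define G where "G x = x ^ 2 * cos (2 * \<phi>) / 4 + 8 / pi * Im (quartic_series (of_real x * cis \<phi>))"
    for x :: real
  define b where "b k = 1 - inverse (real (Suc k)) / 2" for k
  have b_bounds: "1 / 2 \<le> b k" "b k < 1" for k
    using inverse_le_1_iff[of "real (Suc k)"] by (auto simp: b_def)
  have b_pos: "0 < b k" for k
    using b_bounds(1)[of k] by simp
  have b_mono: "b k \<le> b (Suc k)" for k
    by (simp add: b_def field_simps)
  have "b \<longlonglongrightarrow> 1 - 0 / (2 :: real)"
    unfolding b_def by (intro tendsto_intros LIMSEQ_inverse_real_of_nat) simp
  then have b_lim: "b \<longlonglongrightarrow> 1" by simp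
  have J_sym_b: "J_sym (b k) \<phi> = G (b k) - ln (b k) / 2" for k
    using J_eq_ln_plus_J_sym[of "b k" \<phi>] J_eq_quartic_series_less_one[of "b k" \<phi>] b_bounds[of k]
    by (simp add: G_def)
  have G_lim: "(\<lambda>k. G (b k)) \<longlonglongrightarrow> G 1"
  proof -
    have "(\<lambda>k. of_real (b k) * cis \<phi>) \<longlonglongrightarrow> of_real 1 * cis \<phi>"
      by (intro tendsto_intros b_lim)
    moreover have "norm (of_real (b k) * cis \<phi>) \<le> 1" for k
      using b_bounds[of k] by (simp add: norm_mult)
    ultimately have "(\<lambda>k. quartic_series (of_real (b k) * cis \<phi>)) \<longlonglongrightarrow> quartic_series (of_real 1 * cis \<phi>)"
      by (intro continuous_on_tendsto_compose[OF continuous_on_quartic_series])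
         (auto intro!: always_eventually)
    then show ?thesis
      unfolding G_def by (intro tendsto_intros b_lim) simp_all
  qed
  have "(\<lambda>k. G (b k) - ln (b k) / 2) \<longlonglongrightarrow> G 1 - ln 1 / 2"
    using b_bounds by (intro tendsto_intros G_lim b_lim) auto
  then have J_sym_lim: "(\<lambda>k. J_sym (b k) \<phi>) \<longlonglongrightarrow> G 1"
    by (simp add: J_sym_b)
  have "(\<lambda>k. J_sym (b k) \<phi>) \<longlonglongrightarrow> J_sym 1 \<phi>"
    using b_pos b_bounds(2) b_mono b_lim J_sym_lim
    by (intro J_sym_tendsto_one) (auto simp: convergent_def)
  then have "J_sym 1 \<phi> = G 1"
    using J_sym_lim LIMSEQ_unique by fastforce
  then show ?thesis
    using J_eq_ln_plus_J_sym[of 1 \<phi>] \<open>a = 1\<close> by (simp add: G_def)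
qed

lemma J_cis_cong:
  assumes "cis \<phi> = cis \<psi>"
  shows "J a \<phi> = J a \<psi>"
proof -
  have "cos \<phi> = cos \<psi>" "sin \<phi> = sin \<psi>"
    using arg_cong[OF assms, of Re] arg_cong[OF assms, of Im] by simp_all
  then show ?thesis
    by (simp add: J_def cos_diff)
qed

lemma J_reflection:
  assumes "1 < a" "0 \<le> b" "of_real a * cis \<phi> / of_real (a ^ 2) = of_real b * cis \<psi>"
  shows "J a \<phi> = J b \<psi> + ln a"
proof -
  have cis_eq: "of_real (1 / a) * cis \<phi> = of_real b * cis \<psi>"
    using assms(1,3) by (simp add: power2_eq_square field_simps)
  then have "norm (of_real (1 / a) * cis \<phi>) = norm (of_real b * cis \<psi> :: complex)"
    by (rule arg_cong)
  then have "b = 1 / a"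
    using assms(1,2) by (simp add: norm_mult norm_divide)
  with cis_eq have "cis \<phi> = cis \<psi>"
    using assms(1) by simp
  then show ?thesis
    using J_inverse[of a \<phi>] J_cis_cong[of \<phi> \<psi> "1 / a"] assms(1) \<open>b = 1 / a\<close> by simp
qed

theorem lemma4p1:
  fixes \<alpha> :: complex and a \<phi> :: real
  assumes "a \<ge> 0" and "\<alpha> = of_real a * cis \<phi>"
  shows "(0 < cmod \<alpha> \<and> cmod \<alpha> \<le> 1 \<and> \<alpha> \<noteq> 1 \<and> \<alpha> \<noteq> -1 \<longrightarrow>
           J a \<phi> = (cmod \<alpha>)^2 / 4 * cos (2 * \<phi>)
             - 1 / (2 * pi) * Im ((\<alpha> - 1 / \<alpha>) - (\<alpha>^2 - 1 / \<alpha>^2) * arctanh_ps \<alpha>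
                                   + 4 * Li2 \<alpha> - Li2 (\<alpha>^2)))
       \<and> (cmod \<alpha> > 1 \<longrightarrow>
           (\<forall>b \<psi>. b \<ge> 0 \<and> \<alpha> / of_real ((cmod \<alpha>)^2) = of_real b * cis \<psi> \<longrightarrow>
                J a \<phi> = J b \<psi> + ln (cmod \<alpha>)))"
proof (intro conjI impI allI)
  have norm_\<alpha>: "cmod \<alpha> = a"
    using assms by (simp add: norm_mult)
  show "J a \<phi> = (cmod \<alpha>)^2 / 4 * cos (2 * \<phi>)
          - 1 / (2 * pi) * Im ((\<alpha> - 1 / \<alpha>) - (\<alpha>^2 - 1 / \<alpha>^2) * arctanh_ps \<alpha>
                                + 4 * Li2 \<alpha> - Li2 (\<alpha>^2))"
    if "0 < cmod \<alpha> \<and> cmod \<alpha> \<le> 1 \<and> \<alpha> \<noteq> 1 \<and> \<alpha> \<noteq> -1"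
  proof -
    have "\<alpha> \<noteq> 0" "\<alpha> ^ 2 \<noteq> 1"
      using that by (auto simp: power2_eq_1_iff)
    then have "(\<alpha> - 1 / \<alpha>) - (\<alpha>^2 - 1 / \<alpha>^2) * arctanh_ps \<alpha> + 4 * Li2 \<alpha> - Li2 (\<alpha>^2) =
               -16 * quartic_series \<alpha>"
      using that by (intro quartic_series_identity) auto
    moreover have "J a \<phi> = a ^ 2 * cos (2 * \<phi>) / 4 + 8 / pi * Im (quartic_series \<alpha>)"
      using J_eq_quartic_series[of a \<phi>] that assms norm_\<alpha> by simp
    ultimately show ?thesis
      by (simp add: norm_\<alpha>)
  qed
  show "J a \<phi> = J b \<psi> + ln (cmod \<alpha>)"
    if "cmod \<alpha> > 1" and "b \<ge> 0 \<and> \<alpha> / of_real ((cmod \<alpha>)^2) = of_real b * cis \<psi>" for b \<psi>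
    using J_reflection[of a b \<phi> \<psi>] that assms norm_\<alpha> by simp
qed

end
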